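(* Let $M$ be a monoid. Then $\mathbb{X}(M)$ is a strong $M$-partial order.
   Context: A monoid is a semigroup with a two-sided identity $1_M$; by convention, whenever a monoid acts on a set, $1_M$ acts as the identity. An $M$-partial order is a set $X$ with an action of $M$ and a partial order $\leq_X$ such that $x\leq_X y$ implies $ax\leq_X ay$ for all $x,y\in X$, $a\in M$. An $M$-partial order $X$ is strong if for all $y\in X$ and $a\in M$, $\{ax : x\in X,\ x\leq_X y\}=\{x\in X : x\leq_X ay\}$. $\mathbb{X}(M)=\{aM : a\in M\}$ (the set of principal right ideals of $M$), partially ordered by inclusion, with $M$ acting by left multiplication: $b\cdot(aM)=baM$. *)

theory Defs
  imports Main
begin

definition monoid_action :: "'x set \<Rightarrow> ('m::monoid_mult \<Rightarrow> 'x \<Rightarrow> 'x) \<Rightarrow> bool" where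
  "monoid_action X act \<longleftrightarrow>
     (\<forall>a x. x \<in> X \<longrightarrow> act a x \<in> X) \<and>
     (\<forall>x\<in>X. act 1 x = x) \<and>
     (\<forall>a b x. x \<in> X \<longrightarrow> act (a * b) x = act a (act b x))"

definition partial_order_set :: "'x set \<Rightarrow> ('x \<Rightarrow> 'x \<Rightarrow> bool) \<Rightarrow> bool" where
  "partial_order_set X le \<longleftrightarrow>
     (\<forall>x\<in>X. le x x) \<and>
     (\<forall>x\<in>X. \<forall>y\<in>X. le x y \<and> le y x \<longrightarrow> x = y) \<and>
     (\<forall>x\<in>X. \<forall>y\<in>X. \<forall>z\<in>X. le x y \<and> le y z \<longrightarrow> le x z)"

definition M_partial_order :: "'x set \<Rightarrow> ('m::monoid_mult \<Rightarrow> 'x \<Rightarrow> 'x) \<Rightarrow> ('x \<Rightarrow> 'x \<Rightarrow> bool) \<Rightarrow> bool" where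
  "M_partial_order X act le \<longleftrightarrow>
     monoid_action X act \<and> partial_order_set X le \<and>
     (\<forall>x\<in>X. \<forall>y\<in>X. \<forall>a. le x y \<longrightarrow> le (act a x) (act a y))"

definition strong_M_partial_order :: "'x set \<Rightarrow> ('m::monoid_mult \<Rightarrow> 'x \<Rightarrow> 'x) \<Rightarrow> ('x \<Rightarrow> 'x \<Rightarrow> bool) \<Rightarrow> bool" where
  "strong_M_partial_order X act le \<longleftrightarrow>
     M_partial_order X act le \<and>
     (\<forall>y\<in>X. \<forall>a. {act a x | x. x \<in> X \<and> le x y} = {x \<in> X. le x (act a y)})"

definition principal_right_ideals :: "('m::monoid_mult) set set" where
  "principal_right_ideals = {(\<lambda>m. a * m) ` UNIV | a. True}"

definition left_mult_action :: "'m::monoid_mult \<Rightarrow> 'm set \<Rightarrow> 'm set" where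
  "left_mult_action b S = (\<lambda>s. b * s) ` S"

end

theory Submission
  imports Defs
begin

text \<open>The image under a of the principal right ideals contained in bM consists exactly of
those contained in abM: if cM \<subseteq> abM then c = abk, so cM is a applied to bkM \<subseteq> bM.\<close>

lemma mem_principal_right_ideals_iff:
  "S \<in> principal_right_ideals \<longleftrightarrow> (\<exists>a. S = range (\<lambda>m. a * m))"
  by (auto simp: principal_right_ideals_def)

lemma left_mult_action_range:
  "left_mult_action b (range (\<lambda>m. a * m)) = range (\<lambda>m. (b * a) * m)"
  by (auto simp: left_mult_action_def mult.assoc image_iff)

lemma range_mult_subset_iff:
  "range (\<lambda>m. (c::'m::monoid_mult) * m) \<subseteq> range (\<lambda>m. a * m) \<longleftrightarrow> (\<exists>k. c = a * k)"
proof
  assume "range (\<lambda>m. c * m) \<subseteq> range (\<lambda>m. a * m)"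
  then have "c * 1 \<in> range (\<lambda>m. a * m)" by blast
  then show "\<exists>k. c = a * k" by auto
qed (auto simp: mult.assoc)

lemma left_mult_action_mono: "S \<subseteq> T \<Longrightarrow> left_mult_action a S \<subseteq> left_mult_action a T"
  unfolding left_mult_action_def by (rule image_mono)

lemma partial_order_set_subset: "partial_order_set X (\<subseteq>)"
  unfolding partial_order_set_def by blast

lemma monoid_action_left_mult_action:
  "monoid_action (principal_right_ideals :: 'm::monoid_mult set set) left_mult_action"
  unfolding monoid_action_def
proof (intro conjI allI impI ballI)
  fix a :: 'm and x :: "'m set"
  assume "x \<in> principal_right_ideals"
  then obtain c where "x = range (\<lambda>m. c * m)"
    by (auto simp: mem_principal_right_ideals_iff)
  then show "left_mult_action a x \<in> principal_right_ideals"
    by (auto simp: left_mult_action_range mem_principal_right_ideals_iff)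
qed (simp_all add: left_mult_action_def image_image mult.assoc)

lemma M_partial_order_principal_right_ideals:
  "M_partial_order (principal_right_ideals :: 'm::monoid_mult set set) left_mult_action (\<subseteq>)"
  unfolding M_partial_order_def
  by (simp add: monoid_action_left_mult_action partial_order_set_subset left_mult_action_mono)

lemma left_mult_action_down_set:
  fixes a b :: "'m::monoid_mult"
  defines "y \<equiv> range (\<lambda>m. b * m)"
  shows "{left_mult_action a x | x. x \<in> principal_right_ideals \<and> x \<subseteq> y}
           = {x \<in> principal_right_ideals. x \<subseteq> left_mult_action a y}"
proof (intro set_eqI iffI)
  fix z
  assume "z \<in> {left_mult_action a x | x. x \<in> principal_right_ideals \<and> x \<subseteq> y}"
  then obtain c k where z: "z = range (\<lambda>m. (a * c) * m)" and "c = b * k"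
    by (auto simp: mem_principal_right_ideals_iff left_mult_action_range range_mult_subset_iff y_def)
  then have "a * c = (a * b) * k" by (simp add: mult.assoc)
  then have "z \<subseteq> left_mult_action a y"
    unfolding z y_def left_mult_action_range range_mult_subset_iff by blast
  moreover have "z \<in> principal_right_ideals"
    unfolding z mem_principal_right_ideals_iff by blast
  ultimately show "z \<in> {x \<in> principal_right_ideals. x \<subseteq> left_mult_action a y}"
    by blast
next
  fix z
  assume "z \<in> {x \<in> principal_right_ideals. x \<subseteq> left_mult_action a y}"
  then obtain k where z: "z = range (\<lambda>m. (a * b * k) * m)"
    by (auto simp: mem_principal_right_ideals_iff left_mult_action_range range_mult_subset_iff y_def)
  let ?x = "range (\<lambda>m. (b * k) * m)"
  have "?x \<in> principal_right_ideals"
    unfolding mem_principal_right_ideals_iff by blast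
  moreover have "?x \<subseteq> y"
    unfolding y_def range_mult_subset_iff by blast
  moreover have "z = left_mult_action a ?x"
    unfolding z left_mult_action_range by (simp only: mult.assoc)
  ultimately show "z \<in> {left_mult_action a x | x. x \<in> principal_right_ideals \<and> x \<subseteq> y}"
    by blast
qed

theorem lemma2p1:
  shows "strong_M_partial_order (principal_right_ideals :: ('m::monoid_mult) set set)
           (left_mult_action :: 'm \<Rightarrow> 'm set \<Rightarrow> 'm set) (\<subseteq>)"
  unfolding strong_M_partial_order_def
proof (intro conjI ballI allI)
  fix y :: "'m set" and a :: 'm
  assume "y \<in> principal_right_ideals"
  then obtain b where "y = range (\<lambda>m. b * m)"
    by (auto simp: mem_principal_right_ideals_iff)
  then show "{left_mult_action a x | x. x \<in> principal_right_ideals \<and> x \<subseteq> y}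
               = {x \<in> principal_right_ideals. x \<subseteq> left_mult_action a y}"
    by (simp add: left_mult_action_down_set)
qed (rule M_partial_order_principal_right_ideals)

end
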